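(* Let $\bm{L}_t\in\mathbb{R}^{n_1\times n_1}$ and $\bm{R}_t\in\mathbb{R}^{n_2\times n_2}$ be diagonal matrices with positive diagonal entries. For any $\bm{A}\in\mathbb{R}^{n_1\times n_1}$, $\bm{B}\in\mathbb{R}^{n_1\times n_2}$ and $\bm{C}\in\mathbb{R}^{n_2\times n_2}$, $$\|\bm{A}\bm{B}\|_{\mathcal{W}_t}\le\|\bm{A}\|_{\bm{L}_t^{1/4}}\|\bm{B}\|_{\mathcal{W}_t}\quad\text{and}\quad \|\bm{B}\bm{C}\|_{\mathcal{W}_t}\le\mathrm{cond}(\bm{R}_t^{-1/4})\,\|\bm{B}\|_{\mathcal{W}_t}\,\|\bm{C}\|_{\bm{R}_t^{1/4}}.$$
   Context: $\|\bm{Z}\|_{\mathcal{W}_t}^2=\langle\bm{L}_t^{1/4}\bm{Z}\bm{R}_t^{1/4},\bm{Z}\rangle$ (equivalently $\|\bm{Z}\|_{\mathcal{W}_t}=\|\bm{L}_t^{1/8}\bm{Z}\bm{R}_t^{1/8}\|_F$). For a symmetric positive definite $\bm{M}$ of size $k$, $\|\bm{x}\|_{\bm{M}}=\langle\bm{M}\bm{x},\bm{x}\rangle^{1/2}$ on $\mathbb{R}^k$ and for $\bm{A}\in\mathbb{R}^{k\times k}$, $\|\bm{A}\|_{\bm{M}}=\sup_{\bm{x}\neq0}\|\bm{A}\bm{x}\|_{\bm{M}}/\|\bm{x}\|_{\bm{M}}$. $\mathrm{cond}(\bm{Z})=\sigma_{\max}(\bm{Z})/\sigma_{\min}(\bm{Z})$.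 In the paper $\bm{L}_t=\epsilon_t\bm{I}+\mathrm{diag}(\bm{G}_t\bm{G}_t^T)$, $\bm{R}_t=\epsilon_t\bm{I}+\mathrm{diag}(\bm{G}_t^T\bm{G}_t)$, $\epsilon_t>0$. *)

theory Defs
  imports "HOL-Analysis.Analysis"
begin

text \<open>Matrices are Cartesian-space matrices: real^'c^'r has rows indexed by 'r
and columns by 'c.\<close>

definition is_pos_diag :: "real^'n^'n \<Rightarrow> bool" where
  "is_pos_diag M \<longleftrightarrow> (\<forall>i j. i \<noteq> j \<longrightarrow> M$i$j = 0) \<and> (\<forall>i. M$i$i > 0)"

definition diag_powr :: "real^'n^'n \<Rightarrow> real \<Rightarrow> real^'n^'n" where
  "diag_powr M p = (\<chi> i j. if i = j then (M$i$i) powr p else 0)"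

definition frob_inner :: "real^'c^'r \<Rightarrow> real^'c^'r \<Rightarrow> real" where
  "frob_inner X Y = (\<Sum>i\<in>UNIV. \<Sum>j\<in>UNIV. X$i$j * Y$i$j)"

definition wnorm :: "real^'n1^'n1 \<Rightarrow> real^'n2^'n2 \<Rightarrow> real^'n2^'n1 \<Rightarrow> real" where
  "wnorm L R Z = sqrt (frob_inner (diag_powr L (1/4) ** Z ** diag_powr R (1/4)) Z)"

definition vec_Mnorm :: "real^'n^'n \<Rightarrow> real^'n \<Rightarrow> real" where
  "vec_Mnorm M x = sqrt ((M *v x) \<bullet> x)"

definition mat_Mnorm :: "real^'n^'n \<Rightarrow> real^'n^'n \<Rightarrow> real" where
  "mat_Mnorm M A = (SUP x\<in>{x. x \<noteq> 0}. vec_Mnorm M (A *v x) / vec_Mnorm M x)"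

definition sigma_max :: "real^'n^'n \<Rightarrow> real" where
  "sigma_max Z = (SUP x\<in>{x. norm x = 1}. norm (Z *v x))"

definition sigma_min :: "real^'n^'n \<Rightarrow> real" where
  "sigma_min Z = (INF x\<in>{x. norm x = 1}. norm (Z *v x))"

definition cond :: "real^'n^'n \<Rightarrow> real" where
  "cond Z = sigma_max Z / sigma_min Z"

end

theory Submission imports Defs begin

text \<open>
  With l and r the diagonals of L^(1/4) and R^(1/4), the squared weighted norm
  sum_ij l_i r_j Z_ij^2 is an r-weighted sum of the squared L^(1/4)-norms of the columns of Z,
  and an l-weighted sum of the squared R^(1/4)-norms of its rows. The columns of AB are A times
  the columns of B, so the first inequality is the operator-norm bound applied column by column.
  The rows of BC are C^T times the rows of B. Transposition preserves operator bounds for the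
  Euclidean norm but not for the R^(1/4)-norm, so we pass to the Euclidean norm and back; the
  two changes of norm cost max r / min r, which is exactly the condition number of R^(-1/4).
\<close>

lemma finite_ex_min_max:
  fixes f :: "'n::finite \<Rightarrow> 'a::linorder"
  obtains k m where "\<And>j. f k \<le> f j" "\<And>j. f j \<le> f m"
proof -
  have "Min (range f) \<in> range f" "Max (range f) \<in> range f"
    by (auto intro: Min_in Max_in)
  then obtain k m where "f k = Min (range f)" "f m = Max (range f)"
    by (metis rangeE)
  then show ?thesis
    by (intro that[of k m]) simp_all
qed

lemma power2_norm_vec: "(norm (x::real^'n))\<^sup>2 = (\<Sum>i\<in>UNIV. (x$i)\<^sup>2)"
  by (simp only: power2_norm_eq_inner) (simp add: inner_vec_def power2_eq_square)

lemma sqrt_weighted_sum_squares_le: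
  assumes "\<And>j. j \<in> J \<Longrightarrow> 0 \<le> w j" "\<And>j. j \<in> J \<Longrightarrow> 0 \<le> f j"
    and "\<And>j. j \<in> J \<Longrightarrow> f j \<le> c * g j" and "0 \<le> c"
  shows "sqrt (\<Sum>j\<in>J. w j * (f j)\<^sup>2) \<le> c * sqrt (\<Sum>j\<in>J. w j * (g j)\<^sup>2)"
proof -
  have "(\<Sum>j\<in>J. w j * (f j)\<^sup>2) \<le> (\<Sum>j\<in>J. w j * (c * g j)\<^sup>2)"
    using assms by (intro sum_mono mult_left_mono power_mono) auto
  also have "\<dots> = c\<^sup>2 * (\<Sum>j\<in>J. w j * (g j)\<^sup>2)"
    by (simp add: sum_distrib_left power_mult_distrib mult_ac)
  finally have "sqrt (\<Sum>j\<in>J. w j * (f j)\<^sup>2) \<le> sqrt (c\<^sup>2 * (\<Sum>j\<in>J. w j * (g j)\<^sup>2))"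
    by (rule real_sqrt_le_mono)
  also have "\<dots> = c * sqrt (\<Sum>j\<in>J. w j * (g j)\<^sup>2)"
    using assms(4) by (simp add: real_sqrt_mult)
  finally show ?thesis .
qed

lemma norm_transpose_mult_le:
  fixes C :: "real^'n^'m"
  assumes C: "\<And>x. norm (C *v x) \<le> k * norm x"
  shows "norm (transpose C *v y) \<le> k * norm y"
proof -
  let ?u = "transpose C *v y"
  have "(norm ?u)\<^sup>2 = y \<bullet> (C *v ?u)"
    by (simp add: power2_norm_eq_inner dot_lmul_matrix)
  also have "\<dots> \<le> norm y * norm (C *v ?u)"
    by (rule norm_cauchy_schwarz)
  also have "\<dots> \<le> norm y * (k * norm ?u)"
    by (simp add: C mult_left_mono)
  finally have "norm ?u * norm ?u \<le> (k * norm y) * norm ?u"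
    by (simp add: power2_eq_square mult_ac)
  moreover have "0 \<le> k"
  proof -
    obtain i :: 'n where True by blast
    show ?thesis
      using order_trans[OF norm_ge_zero C[of "axis i 1"]] by (simp add: norm_axis_1)
  qed
  ultimately show ?thesis
    by (cases "norm ?u = 0") (simp_all add: mult_le_cancel_right)
qed

locale Mnorm_equivalent =
  fixes M :: "real^'n^'n" and \<alpha> \<beta> :: real
  assumes alpha_pos: "0 < \<alpha>"
    and lower: "\<And>x. \<alpha> * norm x \<le> vec_Mnorm M x"
    and upper: "\<And>x. vec_Mnorm M x \<le> \<beta> * norm x"
begin

lemma vec_Mnorm_nonneg: "0 \<le> vec_Mnorm M x"
  by (rule order_trans[OF _ lower]) (simp add: alpha_pos less_imp_le)

lemma vec_Mnorm_pos: "x \<noteq> 0 \<Longrightarrow> 0 < vec_Mnorm M x"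
  by (rule order_less_le_trans[OF _ lower]) (simp add: alpha_pos)

lemma beta_ge_alpha: "\<alpha> \<le> \<beta>"
proof -
  obtain i :: 'n where True by blast
  show ?thesis
    using lower[of "axis i 1"] upper[of "axis i 1"] by (simp add: norm_axis_1)
qed

lemma beta_nonneg: "0 \<le> \<beta>"
  using alpha_pos beta_ge_alpha by simp

lemma bdd_above_Mnorm_ratios:
  "bdd_above ((\<lambda>x. vec_Mnorm M (A *v x) / vec_Mnorm M x) ` {x. x \<noteq> 0})"
proof -
  obtain c where c: "0 < c" "\<And>x. norm (A *v x) \<le> c * norm x"
    using linear_bounded_pos[OF matrix_vector_mul_linear] by blast
  have "vec_Mnorm M (A *v x) / vec_Mnorm M x \<le> \<beta> * c / \<alpha>" if "x \<noteq> 0" for x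
  proof -
    have "vec_Mnorm M (A *v x) \<le> \<beta> * norm (A *v x)"
      by (rule upper)
    also have "\<dots> \<le> \<beta> * (c * norm x)"
      by (intro mult_left_mono c(2) beta_nonneg)
    also have "\<dots> = \<beta> * c / \<alpha> * (\<alpha> * norm x)"
      using alpha_pos by simp
    also have "\<dots> \<le> \<beta> * c / \<alpha> * vec_Mnorm M x"
      using alpha_pos beta_nonneg c(1) by (intro mult_left_mono lower) simp
    finally show ?thesis
      using vec_Mnorm_pos[OF that] by (simp add: divide_le_eq)
  qed
  then show ?thesis
    by (intro bdd_aboveI2[of _ _ "\<beta> * c / \<alpha>"]) auto
qed

lemma vec_Mnorm_mult_le: "vec_Mnorm M (A *v x) \<le> mat_Mnorm M A * vec_Mnorm M x"
proof (cases "x = 0")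
  case True
  then show ?thesis
    using lower[of 0] upper[of 0] by simp
next
  case False
  then have "vec_Mnorm M (A *v x) / vec_Mnorm M x \<le> mat_Mnorm M A"
    unfolding mat_Mnorm_def by (intro cSUP_upper bdd_above_Mnorm_ratios) simp
  then show ?thesis
    using vec_Mnorm_pos[OF False] by (simp add: divide_le_eq)
qed

lemma mat_Mnorm_nonneg: "0 \<le> mat_Mnorm M A"
proof -
  obtain i :: 'n where True by blast
  have "axis i (1::real) \<noteq> 0"
    by (simp add: axis_eq_0_iff)
  then have "vec_Mnorm M (A *v axis i 1) / vec_Mnorm M (axis i 1) \<le> mat_Mnorm M A"
    unfolding mat_Mnorm_def by (intro cSUP_upper bdd_above_Mnorm_ratios) simp
  moreover have "0 \<le> vec_Mnorm M (A *v axis i 1) / vec_Mnorm M (axis i 1)"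
    by (simp add: vec_Mnorm_nonneg)
  ultimately show ?thesis
    by linarith
qed

lemma norm_mult_le_mat_Mnorm: "norm (A *v x) \<le> \<beta> / \<alpha> * mat_Mnorm M A * norm x"
proof -
  have "\<alpha> * norm (A *v x) \<le> mat_Mnorm M A * vec_Mnorm M x"
    using lower vec_Mnorm_mult_le order_trans by blast
  also have "\<dots> \<le> mat_Mnorm M A * (\<beta> * norm x)"
    by (intro mult_left_mono upper mat_Mnorm_nonneg)
  finally show ?thesis
    using alpha_pos by (simp add: field_simps)
qed

lemma vec_Mnorm_transpose_mult_le:
  "vec_Mnorm M (transpose C *v y) \<le> (\<beta> / \<alpha>)\<^sup>2 * mat_Mnorm M C * vec_Mnorm M y"
proof -
  have "vec_Mnorm M (transpose C *v y) \<le> \<beta> * norm (transpose C *v y)"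
    by (rule upper)
  also have "\<dots> \<le> \<beta> * (\<beta> / \<alpha> * mat_Mnorm M C * norm y)"
    by (intro mult_left_mono norm_transpose_mult_le norm_mult_le_mat_Mnorm beta_nonneg)
  also have "\<dots> = (\<beta> / \<alpha>)\<^sup>2 * mat_Mnorm M C * (\<alpha> * norm y)"
    using alpha_pos by (simp add: power2_eq_square)
  also have "\<dots> \<le> (\<beta> / \<alpha>)\<^sup>2 * mat_Mnorm M C * vec_Mnorm M y"
    by (intro mult_left_mono lower mult_nonneg_nonneg mat_Mnorm_nonneg) simp
  finally show ?thesis .
qed

end

lemma cond_nonneg: "0 \<le> cond (Z :: real^'n^'n)"
proof -
  obtain i :: 'n where True by blast
  obtain c where "\<And>x. norm (Z *v x) \<le> c * norm x"
    using linear_bounded_pos[OF matrix_vector_mul_linear] by blast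
  then have "bdd_above ((\<lambda>x. norm (Z *v x)) ` {x. norm x = 1})"
    by (intro bdd_aboveI2[of _ _ c]) (metis mem_Collect_eq mult.right_neutral)
  then have "norm (Z *v axis i 1) \<le> sigma_max Z"
    unfolding sigma_max_def by (rule cSUP_upper[rotated]) (simp add: norm_axis_1)
  then have "0 \<le> sigma_max Z"
    using norm_ge_zero order_trans by blast
  moreover have "{x::real^'n. norm x = 1} \<noteq> {}"
    using norm_axis_1[of i] by blast
  then have "0 \<le> sigma_min Z"
    unfolding sigma_min_def by (rule cINF_greatest) simp
  ultimately show ?thesis
    unfolding cond_def by simp
qed

definition diag_mat :: "('n::finite \<Rightarrow> real) \<Rightarrow> real^'n^'n" where
  "diag_mat d = (\<chi> i j. if i = j then d i else 0)"

lemma diag_powr_eq_diag_mat: "diag_powr M p = diag_mat (\<lambda>i. M$i$i powr p)"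
  by (simp add: diag_powr_def diag_mat_def)

lemma diag_mat_mult_vec: "diag_mat d *v x = (\<chi> i. d i * x$i)"
  by (simp add: diag_mat_def matrix_vector_mult_def if_distrib[of "\<lambda>a. a * _"] cong: if_cong)

lemma diag_mat_mult_axis: "diag_mat d *v axis k 1 = d k *\<^sub>R axis k 1"
  by (simp add: diag_mat_mult_vec vec_eq_iff axis_def)

lemma diag_mat_mult_mult_diag_mat:
  "(diag_mat l ** Z ** diag_mat r) $ i $ j = l i * Z$i$j * r j"
  by (simp add: diag_mat_def matrix_matrix_mult_def if_distrib[of "\<lambda>a. a * _"]
      if_distrib[of "\<lambda>a. _ * a"] cong: if_cong)

lemma power2_norm_diag_mat_mult_vec:
  "(norm (diag_mat d *v x))\<^sup>2 = (\<Sum>i\<in>UNIV. (d i)\<^sup>2 * (x$i)\<^sup>2)"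
  by (simp add: power2_norm_vec diag_mat_mult_vec power_mult_distrib)

lemma vec_Mnorm_diag_mat: "vec_Mnorm (diag_mat d) x = sqrt (\<Sum>i\<in>UNIV. d i * (x$i)\<^sup>2)"
  by (simp add: vec_Mnorm_def diag_mat_mult_vec inner_vec_def power2_eq_square mult.assoc)

lemma vec_Mnorm_diag_mat_nonneg: "(\<And>i. 0 \<le> d i) \<Longrightarrow> 0 \<le> vec_Mnorm (diag_mat d) x"
  by (simp add: vec_Mnorm_diag_mat sum_nonneg)

lemma power2_vec_Mnorm_diag_mat:
  assumes "\<And>i. 0 \<le> d i"
  shows "(vec_Mnorm (diag_mat d) x)\<^sup>2 = (\<Sum>i\<in>UNIV. d i * (x$i)\<^sup>2)"
  using assms by (simp add: vec_Mnorm_diag_mat sum_nonneg)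

lemma weighted_sum_squares_lower:
  assumes "\<And>i. a \<le> d i"
  shows "a * (norm (x::real^'n))\<^sup>2 \<le> (\<Sum>i\<in>UNIV. d i * (x$i)\<^sup>2)"
  unfolding power2_norm_vec sum_distrib_left
  by (auto intro!: sum_mono mult_right_mono assms)

lemma weighted_sum_squares_upper:
  assumes "\<And>i. d i \<le> b"
  shows "(\<Sum>i\<in>UNIV. d i * (x$i)\<^sup>2) \<le> b * (norm (x::real^'n))\<^sup>2"
  unfolding power2_norm_vec sum_distrib_left
  by (auto intro!: sum_mono mult_right_mono assms)

lemma vec_Mnorm_diag_mat_bounds:
  assumes "0 \<le> a" "\<And>i. a \<le> d i" "\<And>i. d i \<le> b"
  shows "sqrt a * norm x \<le> vec_Mnorm (diag_mat d) x"
    and "vec_Mnorm (diag_mat d) x \<le> sqrt b * norm x"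
proof -
  have "sqrt a * norm x = sqrt (a * (norm x)\<^sup>2)"
    using assms(1) by (simp add: real_sqrt_mult)
  also have "\<dots> \<le> vec_Mnorm (diag_mat d) x"
    unfolding vec_Mnorm_diag_mat
    using weighted_sum_squares_lower[OF assms(2)] by (rule real_sqrt_le_mono)
  finally show "sqrt a * norm x \<le> vec_Mnorm (diag_mat d) x" .
  have "vec_Mnorm (diag_mat d) x \<le> sqrt (b * (norm x)\<^sup>2)"
    unfolding vec_Mnorm_diag_mat
    using weighted_sum_squares_upper[OF assms(3)] by (rule real_sqrt_le_mono)
  also have "\<dots> = sqrt b * norm x"
    by (simp add: real_sqrt_mult)
  finally show "vec_Mnorm (diag_mat d) x \<le> sqrt b * norm x" .
qed

lemma Mnorm_equivalent_diag_mat: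
  assumes "0 < d k" "\<And>i. d k \<le> d i" "\<And>i. d i \<le> d m"
  shows "Mnorm_equivalent (diag_mat d) (sqrt (d k)) (sqrt (d m))"
proof
  show "0 < sqrt (d k)"
    using assms(1) by simp
  show "sqrt (d k) * norm x \<le> vec_Mnorm (diag_mat d) x" for x
    using assms by (intro vec_Mnorm_diag_mat_bounds(1)) auto
  show "vec_Mnorm (diag_mat d) x \<le> sqrt (d m) * norm x" for x
    using assms by (intro vec_Mnorm_diag_mat_bounds(2)[of "d k"]) auto
qed

lemma sigma_max_diag_mat:
  assumes "\<And>i. 0 \<le> d i" "\<And>i. d i \<le> d m"
  shows "sigma_max (diag_mat d) = d m"
  unfolding sigma_max_def
proof (rule cSup_eq_maximum)
  show "d m \<in> (\<lambda>x. norm (diag_mat d *v x)) ` {x. norm x = 1}"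
    using assms(1)[of m]
    by (intro image_eqI[of _ _ "axis m 1"]) (simp_all add: diag_mat_mult_axis norm_axis_1)
next
  fix y assume "y \<in> (\<lambda>x. norm (diag_mat d *v x)) ` {x. norm x = 1}"
  then obtain x where x: "norm x = 1" and y: "y = norm (diag_mat d *v x)"
    by blast
  have "(norm (diag_mat d *v x))\<^sup>2 \<le> (d m)\<^sup>2 * (norm x)\<^sup>2"
    unfolding power2_norm_diag_mat_mult_vec
    by (rule weighted_sum_squares_upper) (intro power_mono assms)
  with x have "(norm (diag_mat d *v x))\<^sup>2 \<le> (d m)\<^sup>2"
    by simp
  then show "y \<le> d m"
    unfolding y using assms(1)[of m] by (rule power2_le_imp_le)
qed

lemma sigma_min_diag_mat:
  assumes "0 \<le> d k" "\<And>i. d k \<le> d i"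
  shows "sigma_min (diag_mat d) = d k"
  unfolding sigma_min_def
proof (rule cInf_eq_minimum)
  show "d k \<in> (\<lambda>x. norm (diag_mat d *v x)) ` {x. norm x = 1}"
    using assms(1)
    by (intro image_eqI[of _ _ "axis k 1"]) (simp_all add: diag_mat_mult_axis norm_axis_1)
next
  fix y assume "y \<in> (\<lambda>x. norm (diag_mat d *v x)) ` {x. norm x = 1}"
  then obtain x where x: "norm x = 1" and y: "y = norm (diag_mat d *v x)"
    by blast
  have "(d k)\<^sup>2 * (norm x)\<^sup>2 \<le> (norm (diag_mat d *v x))\<^sup>2"
    unfolding power2_norm_diag_mat_mult_vec
    by (rule weighted_sum_squares_lower) (intro power_mono assms)
  with x have "(d k)\<^sup>2 \<le> (norm (diag_mat d *v x))\<^sup>2"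
    by simp
  then show "d k \<le> y"
    unfolding y by (rule power2_le_imp_le) simp
qed

lemma cond_diag_mat:
  assumes "0 \<le> d k" "\<And>i. d k \<le> d i" "\<And>i. d i \<le> d m"
  shows "cond (diag_mat d) = d m / d k"
proof -
  have "0 \<le> d i" for i
    using assms(1,2) order_trans by blast
  then have "sigma_max (diag_mat d) = d m"
    using assms(3) by (rule sigma_max_diag_mat)
  moreover have "sigma_min (diag_mat d) = d k"
    using assms(1,2) by (rule sigma_min_diag_mat)
  ultimately show ?thesis
    by (simp add: cond_def)
qed

lemma vec_Mnorm_diag_mat_mult_le:
  assumes "\<And>i. 0 < d i"
  shows "vec_Mnorm (diag_mat d) (A *v x) \<le> mat_Mnorm (diag_mat d) A * vec_Mnorm (diag_mat d) x"
    and "0 \<le> mat_Mnorm (diag_mat d) A"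
proof -
  obtain k m where "\<And>j. d k \<le> d j" "\<And>j. d j \<le> d m"
    using finite_ex_min_max by blast
  then interpret Mnorm_equivalent "diag_mat d" "sqrt (d k)" "sqrt (d m)"
    using assms by (intro Mnorm_equivalent_diag_mat)
  show "vec_Mnorm (diag_mat d) (A *v x) \<le> mat_Mnorm (diag_mat d) A * vec_Mnorm (diag_mat d) x"
    by (rule vec_Mnorm_mult_le)
  show "0 \<le> mat_Mnorm (diag_mat d) A"
    by (rule mat_Mnorm_nonneg)
qed

lemma vec_Mnorm_diag_mat_transpose_mult_le:
  assumes "\<And>i. 0 < d i"
  shows "vec_Mnorm (diag_mat d) (transpose C *v y)
    \<le> cond (diag_mat (\<lambda>i. inverse (d i))) * mat_Mnorm (diag_mat d) C * vec_Mnorm (diag_mat d) y"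
proof -
  obtain k m where k: "\<And>j. d k \<le> d j" and m: "\<And>j. d j \<le> d m"
    using finite_ex_min_max by blast
  then interpret Mnorm_equivalent "diag_mat d" "sqrt (d k)" "sqrt (d m)"
    using assms by (intro Mnorm_equivalent_diag_mat)
  have "cond (diag_mat (\<lambda>i. inverse (d i))) = inverse (d k) / inverse (d m)"
    using assms k m by (intro cond_diag_mat) (auto intro: le_imp_inverse_le less_imp_le)
  also have "\<dots> = (sqrt (d m) / sqrt (d k))\<^sup>2"
    using assms[of k] assms[of m] by (simp add: power_divide field_simps)
  finally show ?thesis
    using vec_Mnorm_transpose_mult_le by simp
qed

lemma wnorm_eq_weighted_sum:
  "wnorm L R Z = sqrt (\<Sum>i\<in>UNIV. \<Sum>j\<in>UNIV. L$i$i powr (1/4) * R$j$j powr (1/4) * (Z$i$j)\<^sup>2)"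
  unfolding wnorm_def diag_powr_eq_diag_mat frob_inner_def diag_mat_mult_mult_diag_mat
  by (simp add: power2_eq_square mult_ac)

lemma wnorm_by_columns:
  "wnorm L R Z =
    sqrt (\<Sum>j\<in>UNIV. R$j$j powr (1/4) * (vec_Mnorm (diag_powr L (1/4)) (column j Z))\<^sup>2)"
  unfolding wnorm_eq_weighted_sum diag_powr_eq_diag_mat power2_vec_Mnorm_diag_mat[OF powr_ge_zero]
  by (subst sum.swap) (simp add: column_def sum_distrib_left mult_ac)

lemma wnorm_by_rows:
  "wnorm L R Z =
    sqrt (\<Sum>i\<in>UNIV. L$i$i powr (1/4) * (vec_Mnorm (diag_powr R (1/4)) (row i Z))\<^sup>2)"
  unfolding wnorm_eq_weighted_sum diag_powr_eq_diag_mat power2_vec_Mnorm_diag_mat[OF powr_ge_zero]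
  by (simp add: row_def sum_distrib_left mult_ac)

lemma column_matrix_mult: "column j (A ** B) = A *v column j B"
  by (simp add: column_def matrix_matrix_mult_def matrix_vector_mult_def)

lemma row_matrix_mult: "row i (B ** C) = transpose C *v row i (B :: 'a::comm_semiring_1^'n^'m)"
  by (simp add: row_def matrix_matrix_mult_def vector_matrix_mult_def mult.commute)

theorem lemma3p5:
  fixes L :: "real^'n1^'n1" and R :: "real^'n2^'n2"
    and A :: "real^'n1^'n1" and B :: "real^'n2^'n1" and C :: "real^'n2^'n2"
  assumes "is_pos_diag L" and "is_pos_diag R"
  shows "wnorm L R (A ** B) \<le> mat_Mnorm (diag_powr L (1/4)) A * wnorm L R B \<and>
         wnorm L R (B ** C) \<le> cond (diag_powr R (-1/4)) * wnorm L R B * mat_Mnorm (diag_powr R (1/4)) C"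
proof
  have pos_diag: "0 < L$i$i" "0 < R$j$j" for i j
    using assms by (simp_all add: is_pos_diag_def)
  have l_pos: "0 < L$i$i powr (1/4)" for i
    using pos_diag(1)[of i] by simp
  have r_pos: "0 < R$j$j powr (1/4)" for j
    using pos_diag(2)[of j] by simp
  show "wnorm L R (A ** B) \<le> mat_Mnorm (diag_powr L (1/4)) A * wnorm L R B"
    unfolding wnorm_by_columns column_matrix_mult diag_powr_eq_diag_mat
    by (intro sqrt_weighted_sum_squares_le vec_Mnorm_diag_mat_mult_le vec_Mnorm_diag_mat_nonneg
        l_pos) simp_all
  have R_inv: "diag_powr R (-1/4) = diag_mat (\<lambda>j. inverse (R$j$j powr (1/4)))"
    unfolding diag_powr_eq_diag_mat by (simp add: powr_minus[symmetric])
  have "wnorm L R (B ** C)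
      \<le> cond (diag_powr R (-1/4)) * mat_Mnorm (diag_powr R (1/4)) C * wnorm L R B"
    unfolding R_inv wnorm_by_rows row_matrix_mult diag_powr_eq_diag_mat[of R "1/4"]
    by (intro sqrt_weighted_sum_squares_le vec_Mnorm_diag_mat_transpose_mult_le
        vec_Mnorm_diag_mat_nonneg mult_nonneg_nonneg cond_nonneg vec_Mnorm_diag_mat_mult_le(2)
        r_pos) simp_all
  then show "wnorm L R (B ** C)
      \<le> cond (diag_powr R (-1/4)) * wnorm L R B * mat_Mnorm (diag_powr R (1/4)) C"
    by (simp add: mult_ac)
qed

end
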